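(* For any $P,N>0$ with $\frac NP\le\frac{L-1}{L}$ and any $L\in\mathbb{Z}_{\ge2}$, $$\overline{C}_{L-1}(P,N)\ge\frac12\left(\ln\frac{(L-1)P}{LN}+\frac{LN}{(L-1)P}-1\right).$$
   Context: $\mathcal{B}^n(r)$ is the closed Euclidean ball of radius $r$ centered at the origin. For $x_1,\dots,x_L\in\mathbb{R}^n$ with centroid $\bar x=\frac1L\sum_ix_i$, $\overline{\mathrm{rad}}^2(x_1,\dots,x_L)=\frac1L\sum_i\|x_i-\bar x\|_2^2$. A finite $\mathcal{C}\subseteq\mathcal{B}^n(\sqrt{nP})$ is $(P,N,L-1)$-average-radius list-decodable if every $L$ distinct points of $\mathcal{C}$ have $\overline{\mathrm{rad}}^2>nN$. Rate $R(\mathcal{C})=\frac1n\ln|\mathcal{C}|$. $\overline{C}_{L-1}(P,N)=\limsup_{n\to\infty}\sup R(\mathcal{C})$ over such codes in $\mathcal{B}^n(\sqrt{nP})$. *)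

theory Defs
  imports "HOL-Analysis.Analysis" "HOL-Library.Liminf_Limsup"
begin

text \<open>Points of R^n are represented as functions nat => real vanishing outside {..<n}.\<close>

definition in_ball :: "nat \<Rightarrow> real \<Rightarrow> (nat \<Rightarrow> real) \<Rightarrow> bool" where
  "in_ball n r x \<longleftrightarrow> (\<forall>i\<ge>n. x i = 0) \<and> (\<Sum>i<n. (x i)\<^sup>2) \<le> r\<^sup>2"

definition centroid :: "(nat \<Rightarrow> real) set \<Rightarrow> (nat \<Rightarrow> real)" where
  "centroid S = (\<lambda>i. (\<Sum>x\<in>S. x i) / real (card S))"

definition avg_rad2 :: "nat \<Rightarrow> (nat \<Rightarrow> real) set \<Rightarrow> real" where
  "avg_rad2 n S = (\<Sum>x\<in>S. \<Sum>i<n. (x i - centroid S i)\<^sup>2) / real (card S)"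

definition list_decodable :: "nat \<Rightarrow> real \<Rightarrow> real \<Rightarrow> nat \<Rightarrow> (nat \<Rightarrow> real) set \<Rightarrow> bool" where
  "list_decodable n P N L C \<longleftrightarrow> finite C \<and> (\<forall>x\<in>C. in_ball n (sqrt (real n * P)) x) \<and>
     (\<forall>S\<subseteq>C. card S = L \<longrightarrow> avg_rad2 n S > real n * N)"

definition code_rate :: "nat \<Rightarrow> (nat \<Rightarrow> real) set \<Rightarrow> real" where
  "code_rate n C = ln (real (card C)) / real n"

text \<open>Capacity \<open>C_{L-1}(P,N)\<close>: limsup over n of the supremal rate of
  (P,N,L-1)-average-radius list-decodable codes, in the extended reals.\<close>
definition avg_rad_capacity :: "nat \<Rightarrow> real \<Rightarrow> real \<Rightarrow> ereal" where
  "avg_rad_capacity L P N = limsup (\<lambda>n. SUP C\<in>{C. list_decodable n P N L C}. ereal (code_rate n C))"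

end

theory Submission
  imports Defs "HOL-Probability.Probability"
begin

text \<open>Random coding with expurgation. Take \<open>M \<approx> exp (n R)\<close> codewords with independent
  \<open>N(0, Q)\<close> entries, \<open>Q < P\<close>. The moment generating function of a Gaussian quadratic form
  \<open>b (\<Sum>j\<in>T. y j)\<^sup>2 - a (\<Sum>j\<in>T. (y j)\<^sup>2)\<close> is explicit, so Chernoff bounds give the expected
  numbers of codewords violating the power constraint, of \<open>L\<close>-sets of codewords with average
  squared radius at most \<open>n N\<close>, and of coinciding pairs: with
  \<open>f x = (ln x + 1/x - 1) / 2\<close> and \<open>\<rho> = (L - 1) Q / (L N)\<close> they are at most
  \<open>M exp (- n f (Q/P))\<close>, \<open>(M choose L) exp (- n f \<rho>) ^ (L - 1)\<close> and an arbitrarily small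
  multiple of \<open>M\<close>. For \<open>R < f \<rho>\<close> and large \<open>n\<close> each is below \<open>M/8\<close>, so some realisation has
  fewer than \<open>M/2\<close> bad sets, and deleting one codeword from each leaves a list-decodable code of
  more than \<open>M/2\<close> codewords. Letting \<open>Q\<close> tend to \<open>P\<close> gives the bound \<open>f ((L - 1) P / (L N))\<close>.\<close>

section \<open>Gaussian quadratic forms\<close>

definition std_normal :: "real measure" where
  "std_normal = density lborel std_normal_density"

lemma sets_std_normal [measurable_cong]: "sets std_normal = sets borel"
  by (simp add: std_normal_def)

lemma prob_space_std_normal: "prob_space std_normal"
  unfolding std_normal_def by (rule prob_space_normal_density) simp

lemma product_prob_space_std_normal: "product_prob_space (\<lambda>_. std_normal)"
  by (rule product_prob_spaceI) (rule prob_space_std_normal)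

lemma nn_integral_std_normal_exp_quadratic:
  fixes a e :: real
  assumes "2*a + 1 > 0"
  shows "(\<integral>\<^sup>+y. ennreal (exp (e*y - a*y\<^sup>2)) \<partial>std_normal)
       = ennreal (exp (e\<^sup>2 / (2*(2*a + 1))) / sqrt (2*a + 1))"
proof -
  define D where "D = 2*a + 1"
  have D: "D > 0" using assms by (simp add: D_def)
  have complete_square: "std_normal_density y * exp (e*y - a*y\<^sup>2)
      = exp (e\<^sup>2 / (2*D)) / sqrt D * normal_density (e/D) (1 / sqrt D) y" for y
  proof -
    have a: "a = (D - 1) / 2" by (simp add: D_def)
    have "- y\<^sup>2 / 2 + (e*y - a*y\<^sup>2) = e\<^sup>2 / (2*D) + - (y - e/D)\<^sup>2 / (2 * (1 / sqrt D)\<^sup>2)"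
      using D unfolding a by (simp add: field_simps power2_eq_square)
    then show ?thesis
      using D by (simp add: std_normal_density_def normal_density_def exp_add[symmetric]
          real_sqrt_mult real_sqrt_divide power_divide)
  qed
  have "(\<integral>\<^sup>+y. ennreal (exp (e*y - a*y\<^sup>2)) \<partial>std_normal)
      = (\<integral>\<^sup>+y. ennreal (std_normal_density y * exp (e*y - a*y\<^sup>2)) \<partial>lborel)"
    unfolding std_normal_def by (subst nn_integral_density) (auto simp: ennreal_mult)
  also have "\<dots> = (\<integral>\<^sup>+y. ennreal (exp (e\<^sup>2 / (2*D)) / sqrt D) * normal_density (e/D) (1 / sqrt D) y \<partial>lborel)"
    unfolding complete_square using D by (intro nn_integral_cong ennreal_mult) auto
  also have "\<dots> = ennreal (exp (e\<^sup>2 / (2*D)) / sqrt D) * (\<integral>\<^sup>+y. normal_density (e/D) (1 / sqrt D) y \<partial>lborel)"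
    by (rule nn_integral_cmult) simp
  also have "(\<integral>\<^sup>+y. normal_density (e/D) (1 / sqrt D) y \<partial>lborel) = 1"
    using D by (simp add: nn_integral_eq_integral)
  finally show ?thesis by (simp add: D_def)
qed

definition exp_quadratic :: "'i set \<Rightarrow> real \<Rightarrow> real \<Rightarrow> ('i \<Rightarrow> real) \<Rightarrow> real" where
  "exp_quadratic T a b v = exp (b * (\<Sum>j\<in>T. v j)\<^sup>2 - a * (\<Sum>j\<in>T. (v j)\<^sup>2))"

lemma exp_quadratic_pos [simp]: "exp_quadratic T a b v > 0"
  by (simp add: exp_quadratic_def)

lemma borel_measurable_exp_quadratic:
  assumes "T \<subseteq> I"
  shows "(\<lambda>v. ennreal (exp_quadratic T a b v)) \<in> borel_measurable (PiM I (\<lambda>_. std_normal))"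
proof -
  have "(\<lambda>v. v j) \<in> borel_measurable (PiM I (\<lambda>_. std_normal))" if "j \<in> T" for j
    using that assms measurable_component_singleton[of j I "\<lambda>_. std_normal"]
    by (auto simp: measurable_cong_sets[OF refl sets_std_normal])
  then have "(\<lambda>v. \<Sum>j\<in>T. v j) \<in> borel_measurable (PiM I (\<lambda>_. std_normal))"
    "(\<lambda>v. \<Sum>j\<in>T. (v j)\<^sup>2) \<in> borel_measurable (PiM I (\<lambda>_. std_normal))"
    by (auto intro!: borel_measurable_sum borel_measurable_power)
  then show ?thesis
    unfolding exp_quadratic_def by measurable
qed

lemma exp_quadratic_insert:
  assumes "finite S" "k \<notin> S"
  shows "exp_quadratic (insert k S) a b (v(k := y))
       = exp_quadratic S a b v * exp ((2*b*(\<Sum>j\<in>S. v j)) * y - (a - b) * y\<^sup>2)"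
proof -
  have "(\<Sum>j\<in>S. (v(k := y)) j) = (\<Sum>j\<in>S. v j)" "(\<Sum>j\<in>S. ((v(k := y)) j)\<^sup>2) = (\<Sum>j\<in>S. (v j)\<^sup>2)"
    using assms by (auto intro: sum.cong)
  with assms show ?thesis
    by (simp add: exp_quadratic_def exp_add[symmetric] power2_eq_square algebra_simps)
qed

lemma nn_integral_std_normal_exp_quadratic_insert:
  fixes a b :: real
  assumes "finite S" "k \<notin> S" "2*b < 2*a + 1"
  shows "(\<integral>\<^sup>+y. exp_quadratic (insert k S) a b (v(k := y)) \<partial>std_normal)
       = ennreal (1 / sqrt (2*a + 1 - 2*b)) * exp_quadratic S a (b * (2*a + 1) / (2*a + 1 - 2*b)) v"
proof -
  define D where "D = 2*a + 1 - 2*b"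
  define c where "c = (\<Sum>j\<in>S. v j)"
  have D: "D > 0"
    using assms(3) by (simp add: D_def)
  have "(\<integral>\<^sup>+y. exp_quadratic (insert k S) a b (v(k := y)) \<partial>std_normal)
      = (\<integral>\<^sup>+y. ennreal (exp_quadratic S a b v) * exp ((2*b*c) * y - (a - b) * y\<^sup>2) \<partial>std_normal)"
    unfolding exp_quadratic_insert[OF assms(1,2)] c_def
    by (intro nn_integral_cong ennreal_mult) (auto intro: less_imp_le)
  also have "\<dots> = ennreal (exp_quadratic S a b v) * (\<integral>\<^sup>+y. exp ((2*b*c) * y - (a - b) * y\<^sup>2) \<partial>std_normal)"
    by (rule nn_integral_cmult) measurable
  also have "\<dots> = ennreal (exp_quadratic S a b v) * ennreal (exp ((2*b*c)\<^sup>2 / (2*D)) / sqrt D)"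
    using D by (subst nn_integral_std_normal_exp_quadratic) (simp_all add: D_def algebra_simps)
  also have "\<dots> = ennreal (1 / sqrt D) * exp_quadratic S a (b * (2*a + 1) / D) v"
  proof -
    have "b * c\<^sup>2 + (2*b*c)\<^sup>2 / (2*D) = b * (2*a + 1) / D * c\<^sup>2"
      using D by (simp add: D_def field_simps power2_eq_square)
    then have "exp_quadratic S a b v * (exp ((2*b*c)\<^sup>2 / (2*D)) / sqrt D)
        = 1 / sqrt D * exp_quadratic S a (b * (2*a + 1) / D) v"
      by (simp add: exp_quadratic_def c_def exp_add[symmetric] algebra_simps)
    then show ?thesis
      using D by (metis ennreal_mult divide_nonneg_nonneg exp_ge_zero exp_quadratic_pos
          less_imp_le real_sqrt_ge_zero zero_le_one)
  qed
  finally show ?thesis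
    by (simp add: D_def)
qed

lemma normalizing_constant_step:
  fixes D b n :: real
  assumes "0 < D" "0 < D - 2*b"
  shows "1 / sqrt (D - 2*b) * (D powr (- (n - 1) / 2) / sqrt (D - 2 * n * (b * D / (D - 2*b))))
       = D powr (- n / 2) / sqrt (D - 2 * (n + 1) * b)"
proof -
  have "D - 2 * n * (b * D / (D - 2*b)) = D * (D - 2 * (n + 1) * b) / (D - 2*b)"
    using assms(2) by (simp add: field_simps)
  then have sqrt_eq: "sqrt (D - 2*b) * sqrt (D - 2 * n * (b * D / (D - 2*b))) = sqrt D * sqrt (D - 2 * (n + 1) * b)"
    using assms(2) by (simp add: real_sqrt_mult real_sqrt_divide)
  have "D powr (- (n - 1) / 2) = D powr (- n / 2) * sqrt D"
    using assms(1) by (simp add: powr_half_sqrt[symmetric] powr_add[symmetric] field_simps)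
  then have "1 / sqrt (D - 2*b) * (D powr (- (n - 1) / 2) / sqrt (D - 2 * n * (b * D / (D - 2*b))))
      = D powr (- n / 2) * sqrt D / (sqrt (D - 2*b) * sqrt (D - 2 * n * (b * D / (D - 2*b))))"
    by simp
  also have "\<dots> = D powr (- n / 2) / sqrt (D - 2 * (n + 1) * b)"
    unfolding sqrt_eq using assms(1) by simp
  finally show ?thesis .
qed

lemma nn_integral_PiM_exp_quadratic:
  fixes a b :: real
  assumes "finite S" "2*a + 1 > 0" "2*a + 1 - 2 * real (card S) * b > 0"
  shows "(\<integral>\<^sup>+v. exp_quadratic S a b v \<partial>PiM S (\<lambda>_. std_normal))
       = ennreal ((2*a + 1) powr (- (real (card S) - 1) / 2) / sqrt (2*a + 1 - 2 * real (card S) * b))"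
  using assms
proof (induction S arbitrary: b rule: finite_induct)
  case empty
  then show ?case by (simp add: PiM_empty exp_quadratic_def powr_half_sqrt)
next
  case (insert k S)
  interpret product_prob_space "\<lambda>_. std_normal" by (rule product_prob_space_std_normal)
  define D where "D = 2*a + 1"
  define n where "n = real (card S)"
  define b' where "b' = b * D / (D - 2*b)"
  have D: "D > 0" and pos: "D - 2 * (n + 1) * b > 0"
    using insert by (simp_all add: D_def n_def algebra_simps)
  have Db: "D - 2*b > 0"
  proof (cases "b \<le> 0")
    case False
    then have "0 \<le> n * b" by (simp add: n_def)
    with pos show ?thesis by (simp add: algebra_simps)
  qed (use D in simp)
  have "D - 2 * n * b' = D * (D - 2 * (n + 1) * b) / (D - 2*b)"
    using Db by (simp add: b'_def field_simps)
  then have pos': "D - 2 * n * b' > 0"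
    using D Db pos by simp
  have "(\<integral>\<^sup>+v. exp_quadratic (insert k S) a b v \<partial>PiM (insert k S) (\<lambda>_. std_normal))
      = (\<integral>\<^sup>+v. ennreal (1 / sqrt (D - 2*b)) * exp_quadratic S a b' v \<partial>PiM S (\<lambda>_. std_normal))"
    using Db nn_integral_std_normal_exp_quadratic_insert[OF insert(1,2)]
    by (subst product_nn_integral_insert) (auto simp: insert D_def b'_def borel_measurable_exp_quadratic)
  also have "\<dots> = ennreal (1 / sqrt (D - 2*b)) * ennreal (D powr (- (n - 1) / 2) / sqrt (D - 2 * n * b'))"
    using insert.IH[of b'] insert.prems(1) pos'
    by (subst nn_integral_cmult) (auto simp: D_def n_def borel_measurable_exp_quadratic)
  also have "\<dots> = ennreal (D powr (- n / 2) / sqrt (D - 2 * (n + 1) * b))"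
    using normalizing_constant_step[OF D Db, of n] Db pos'
    by (subst ennreal_mult[symmetric]) (auto simp: b'_def)
  finally show ?case
    using insert.hyps by (simp add: D_def n_def algebra_simps)
qed

lemma nn_integral_PiM_exp_quadratic_subset:
  fixes a b :: real
  assumes "finite I" "T \<subseteq> I" "2*a + 1 > 0" "2*a + 1 - 2 * real (card T) * b > 0"
  shows "(\<integral>\<^sup>+v. exp_quadratic T a b v \<partial>PiM I (\<lambda>_. std_normal))
       = ennreal ((2*a + 1) powr (- (real (card T) - 1) / 2) / sqrt (2*a + 1 - 2 * real (card T) * b))"
proof -
  interpret product_prob_space "\<lambda>_. std_normal" by (rule product_prob_space_std_normal)
  have "(\<integral>\<^sup>+v. exp_quadratic T a b v \<partial>PiM I (\<lambda>_. std_normal))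
      = (\<integral>\<^sup>+v. exp_quadratic T a b (restrict v T) \<partial>PiM I (\<lambda>_. std_normal))"
    by (rule nn_integral_cong) (simp add: exp_quadratic_def)
  also have "\<dots> = (\<integral>\<^sup>+v. exp_quadratic T a b v
      \<partial>distr (PiM I (\<lambda>_. std_normal)) (PiM T (\<lambda>_. std_normal)) (\<lambda>v. restrict v T))"
    using assms(1,2) by (subst nn_integral_distr) (auto intro: measurable_restrict_subset borel_measurable_exp_quadratic)
  also have "\<dots> = (\<integral>\<^sup>+v. exp_quadratic T a b v \<partial>PiM T (\<lambda>_. std_normal))"
    using assms(1,2) by (simp add: distr_restrict[symmetric])
  finally show ?thesis
    using nn_integral_PiM_exp_quadratic[of T a b] assms finite_subset[OF assms(2,1)] by simp
qed

section \<open>Gaussian random matrices\<close>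

text \<open>\<open>\<omega> i j\<close> is coordinate \<open>i < n\<close> of codeword \<open>j < M\<close>.\<close>

definition gauss_matrix :: "nat \<Rightarrow> nat \<Rightarrow> (nat \<Rightarrow> nat \<Rightarrow> real) measure" where
  "gauss_matrix n M = PiM {..<n} (\<lambda>_. PiM {..<M} (\<lambda>_. std_normal))"

lemma prob_space_gauss_matrix: "prob_space (gauss_matrix n M)"
  unfolding gauss_matrix_def by (intro prob_space_PiM prob_space_std_normal)

lemma borel_measurable_gauss_matrix_entry:
  "(\<lambda>\<omega>. \<omega> i j) \<in> borel_measurable (gauss_matrix n M)"
proof (cases "i < n \<and> j < M")
  case True
  have "(\<lambda>\<omega>. \<omega> i) \<in> measurable (gauss_matrix n M) (PiM {..<M} (\<lambda>_. std_normal))"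
    unfolding gauss_matrix_def using True by (intro measurable_component_singleton) auto
  moreover have "(\<lambda>v. v j) \<in> borel_measurable (PiM {..<M} (\<lambda>_. std_normal))"
    using True measurable_component_singleton[of j "{..<M}" "\<lambda>_. std_normal"]
    by (auto simp: measurable_cong_sets[OF refl sets_std_normal])
  ultimately show ?thesis
    by (rule measurable_compose)
next
  case False
  \<comment> \<open>outside the index ranges the entries are constant (\<open>undefined\<close>) on the product space\<close>
  then have "\<omega> i j = (if i < n then undefined else (undefined :: nat \<Rightarrow> real) j)"
    if "\<omega> \<in> space (gauss_matrix n M)" for \<omega>
    using that by (auto simp: gauss_matrix_def space_PiM PiE_def extensional_def)
  then show ?thesis
    by (subst measurable_cong[where g = "\<lambda>_. if i < n then undefined else undefined j"]) auto
qed

lemma nn_integral_gauss_matrix_prod_exp_quadratic: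
  fixes a b :: real
  assumes "T \<subseteq> {..<M}" "2*a + 1 > 0" "2*a + 1 - 2 * real (card T) * b > 0"
  shows "(\<integral>\<^sup>+\<omega>. (\<Prod>i<n. ennreal (exp_quadratic T a b (\<omega> i))) \<partial>gauss_matrix n M)
       = ennreal (((2*a + 1) powr (- (real (card T) - 1) / 2) / sqrt (2*a + 1 - 2 * real (card T) * b)) ^ n)"
proof -
  interpret product_prob_space "\<lambda>_. PiM {..<M} (\<lambda>_. std_normal)"
    by (intro product_prob_spaceI prob_space_PiM prob_space_std_normal)
  have "(\<integral>\<^sup>+\<omega>. (\<Prod>i<n. ennreal (exp_quadratic T a b (\<omega> i))) \<partial>gauss_matrix n M)
      = (\<Prod>i<n. \<integral>\<^sup>+v. exp_quadratic T a b v \<partial>PiM {..<M} (\<lambda>_. std_normal))"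
    unfolding gauss_matrix_def using assms(1)
    by (intro product_nn_integral_prod borel_measurable_exp_quadratic) auto
  then show ?thesis
    using assms by (simp add: nn_integral_PiM_exp_quadratic_subset ennreal_power)
qed

definition scatter :: "nat \<Rightarrow> nat set \<Rightarrow> (nat \<Rightarrow> nat \<Rightarrow> real) \<Rightarrow> real" where
  "scatter n T \<omega> = (\<Sum>i<n. (\<Sum>j\<in>T. (\<omega> i j)\<^sup>2) - (\<Sum>j\<in>T. \<omega> i j)\<^sup>2 / card T)"

lemma borel_measurable_scatter [measurable]: "scatter k T \<in> borel_measurable (gauss_matrix n M)"
  unfolding scatter_def using borel_measurable_gauss_matrix_entry
  by (intro borel_measurable_sum borel_measurable_diff borel_measurable_divide borel_measurable_power) auto

lemma borel_measurable_col_norm [measurable]: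
  "(\<lambda>\<omega>. \<Sum>i<k. (\<omega> i j)\<^sup>2) \<in> borel_measurable (gauss_matrix n M)"
  using borel_measurable_gauss_matrix_entry by (intro borel_measurable_sum borel_measurable_power)

lemma prod_exp_quadratic_eq_exp_scatter:
  "(\<Prod>i<n. ennreal (exp_quadratic T a (a / card T) (\<omega> i))) = ennreal (exp (- a * scatter n T \<omega>))"
proof -
  have "exp_quadratic T a (a / card T) v = exp (- a * ((\<Sum>j\<in>T. (v j)\<^sup>2) - (\<Sum>j\<in>T. v j)\<^sup>2 / card T))" for v
    by (simp add: exp_quadratic_def algebra_simps)
  then show ?thesis
    by (simp add: prod_ennreal exp_sum[symmetric] scatter_def sum_distrib_left)
qed

lemma nn_integral_exp_scatter:
  fixes a :: real
  assumes "T \<subseteq> {..<M}" "T \<noteq> {}" "2*a + 1 > 0"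
  shows "(\<integral>\<^sup>+\<omega>. exp (- a * scatter n T \<omega>) \<partial>gauss_matrix n M)
       = ennreal (((2*a + 1) powr (- (real (card T) - 1) / 2)) ^ n)"
proof -
  have "card T > 0"
    using assms(1,2) finite_subset by (auto simp: card_gt_0_iff)
  then have "2*a + 1 - 2 * real (card T) * (a / card T) = 1"
    by simp
  then show ?thesis
    using nn_integral_gauss_matrix_prod_exp_quadratic[of T M a "a / card T" n] assms
    by (simp add: prod_exp_quadratic_eq_exp_scatter)
qed

lemma nn_integral_exp_col_norm:
  fixes t :: real
  assumes "j < M" "t < 1/2"
  shows "(\<integral>\<^sup>+\<omega>. exp (t * (\<Sum>i<n. (\<omega> i j)\<^sup>2)) \<partial>gauss_matrix n M) = ennreal ((1 / sqrt (1 - 2*t)) ^ n)"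
proof -
  have "(\<Prod>i<n. ennreal (exp_quadratic {j} (- t) 0 (\<omega> i))) = ennreal (exp (t * (\<Sum>i<n. (\<omega> i j)\<^sup>2)))" for \<omega>
    by (simp add: prod_ennreal exp_quadratic_def exp_sum[symmetric] sum_distrib_left)
  then show ?thesis
    using nn_integral_gauss_matrix_prod_exp_quadratic[of "{j}" M "- t" 0 n] assms by simp
qed

section \<open>Codes from matrices\<close>

lemma sum_sq_dev_mean:
  fixes z :: "'a \<Rightarrow> real"
  shows "(\<Sum>j\<in>T. (z j - (\<Sum>k\<in>T. z k) / card T)\<^sup>2) = (\<Sum>j\<in>T. (z j)\<^sup>2) - (\<Sum>j\<in>T. z j)\<^sup>2 / card T"
proof (cases "finite T")
  case True
  define m where "m = (\<Sum>k\<in>T. z k) / card T"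
  have "(\<Sum>j\<in>T. (z j - m)\<^sup>2) = (\<Sum>j\<in>T. (z j)\<^sup>2) - 2 * m * (\<Sum>j\<in>T. z j) + card T * m\<^sup>2"
    by (simp add: power2_diff sum.distrib sum_subtractf flip: sum_distrib_left sum_distrib_right)
  also have "\<dots> = (\<Sum>j\<in>T. (z j)\<^sup>2) - (\<Sum>j\<in>T. z j)\<^sup>2 / card T"
    using True by (cases "T = {}") (simp_all add: m_def field_simps power2_eq_square)
  finally show ?thesis
    unfolding m_def .
qed simp

definition codeword :: "nat \<Rightarrow> real \<Rightarrow> (nat \<Rightarrow> nat \<Rightarrow> real) \<Rightarrow> nat \<Rightarrow> nat \<Rightarrow> real" where
  "codeword n \<sigma> \<omega> j = (\<lambda>i. if i < n then \<sigma> * \<omega> i j else 0)"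

lemma in_ball_codeword: "in_ball n r (codeword n \<sigma> \<omega> j) \<longleftrightarrow> \<sigma>\<^sup>2 * (\<Sum>i<n. (\<omega> i j)\<^sup>2) \<le> r\<^sup>2"
  by (simp add: in_ball_def codeword_def power_mult_distrib sum_distrib_left)

lemma avg_rad2_codeword_image:
  assumes "inj_on (codeword n \<sigma> \<omega>) T"
  shows "avg_rad2 n (codeword n \<sigma> \<omega> ` T) = \<sigma>\<^sup>2 * scatter n T \<omega> / card T"
proof -
  let ?x = "codeword n \<sigma> \<omega>"
  have card: "card (?x ` T) = card T"
    using card_image[OF assms] .
  have centroid: "centroid (?x ` T) i = (\<Sum>j\<in>T. ?x j i) / card T" for i
    unfolding centroid_def card using sum.reindex[OF assms, of "\<lambda>y. y i"] by simp
  have "(\<Sum>y\<in>?x ` T. \<Sum>i<n. (y i - centroid (?x ` T) i)\<^sup>2)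
      = (\<Sum>i<n. \<Sum>j\<in>T. (?x j i - (\<Sum>k\<in>T. ?x k i) / card T)\<^sup>2)"
    unfolding centroid sum.reindex[OF assms] comp_def by (rule sum.swap)
  also have "\<dots> = (\<Sum>i<n. \<sigma>\<^sup>2 * ((\<Sum>j\<in>T. (\<omega> i j)\<^sup>2) - (\<Sum>j\<in>T. \<omega> i j)\<^sup>2 / card T))"
    unfolding sum_sq_dev_mean
    by (intro sum.cong) (simp_all add: codeword_def power_mult_distrib sum_distrib_left[symmetric] right_diff_distrib)
  finally show ?thesis
    by (simp add: avg_rad2_def card scatter_def sum_distrib_left)
qed

lemma exists_large_subset_avoiding:
  assumes "finite A" "finite \<B>" "{} \<notin> \<B>"
  shows "\<exists>K\<subseteq>A. card A \<le> card K + card \<B> \<and> (\<forall>B\<in>\<B>. \<not> B \<subseteq> K)"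
proof -
  define pick where "pick B = (SOME x. x \<in> B)" for B :: "'a set"
  have pick: "pick B \<in> B" if "B \<in> \<B>" for B
    unfolding pick_def some_in_eq using that assms(3) by auto
  define K where "K = A - pick ` \<B>"
  have "card A \<le> card (K \<union> pick ` \<B>)"
    using assms(1,2) by (intro card_mono) (auto simp: K_def)
  also have "\<dots> \<le> card K + card (pick ` \<B>)"
    by (rule card_Un_le)
  also have "card (pick ` \<B>) \<le> card \<B>"
    using assms(2) by (rule card_image_le)
  moreover have "\<not> B \<subseteq> K" if "B \<in> \<B>" for B
    using pick[OF that] that by (auto simp: K_def)
  ultimately show ?thesis
    by (intro exI[of _ K]) (auto simp: K_def)
qed

lemma list_decodable_codeword_image:
  assumes "finite K" "\<sigma> \<noteq> 0" "0 \<le> P" "0 < L"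
    and power: "\<And>j. j \<in> K \<Longrightarrow> \<sigma>\<^sup>2 * (\<Sum>i<n. (\<omega> i j)\<^sup>2) \<le> n * P"
    and distinct: "\<And>T. T \<subseteq> K \<Longrightarrow> card T = 2 \<Longrightarrow> 0 < scatter n T \<omega>"
    and spread: "\<And>T. T \<subseteq> K \<Longrightarrow> card T = L \<Longrightarrow> L * (n * N) < \<sigma>\<^sup>2 * scatter n T \<omega>"
  shows "list_decodable n P N L (codeword n \<sigma> \<omega> ` K)" "card (codeword n \<sigma> \<omega> ` K) = card K"
proof -
  have inj: "inj_on (codeword n \<sigma> \<omega>) K"
  proof (rule inj_onI, rule ccontr)
    fix a b assume ab: "a \<in> K" "b \<in> K" "codeword n \<sigma> \<omega> a = codeword n \<sigma> \<omega> b" "a \<noteq> b"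
    have "\<omega> i a = \<omega> i b" if "i < n" for i
      using fun_cong[OF ab(3), of i] that assms(2) by (simp add: codeword_def)
    then have "scatter n {a, b} \<omega> = 0"
      using ab(4) by (simp add: scatter_def power2_eq_square)
    with distinct[of "{a, b}"] ab show False by simp
  qed
  then show "card (codeword n \<sigma> \<omega> ` K) = card K"
    by (rule card_image)
  have "in_ball n (sqrt (n * P)) y" if y: "y \<in> codeword n \<sigma> \<omega> ` K" for y
  proof -
    obtain j where "j \<in> K" "y = codeword n \<sigma> \<omega> j"
      using y by blast
    with power[of j] assms(3) show ?thesis
      by (simp add: in_ball_codeword)
  qed
  moreover have "n * N < avg_rad2 n S" if S: "S \<subseteq> codeword n \<sigma> \<omega> ` K" "card S = L" for S
  proof -
    obtain T where T: "T \<subseteq> K" "S = codeword n \<sigma> \<omega> ` T"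
      using S(1) unfolding subset_image_iff by blast
    have inj_T: "inj_on (codeword n \<sigma> \<omega>) T"
      using inj T(1) by (rule inj_on_subset)
    then have card_T: "card T = L"
      using T S(2) by (simp add: card_image)
    have "n * N < \<sigma>\<^sup>2 * scatter n T \<omega> / L"
      using spread[OF T(1) card_T] assms(4) by (simp add: pos_less_divide_eq mult.commute)
    then show ?thesis
      unfolding T(2) avg_rad2_codeword_image[OF inj_T] card_T .
  qed
  ultimately show "list_decodable n P N L (codeword n \<sigma> \<omega> ` K)"
    using assms(1) by (simp add: list_decodable_def)
qed

text \<open>The codewords are the columns of \<open>\<omega>\<close> scaled by \<open>sqrt Q\<close>; with \<open>r = n P / Q\<close> and
  \<open>d = L n N / Q\<close> the three parts consist of the codewords violating the power constraint, the
  \<open>L\<close>-sets violating the list-decoding condition, and the pairs of equal codewords.\<close>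

definition bad_sets :: "nat \<Rightarrow> nat \<Rightarrow> nat \<Rightarrow> real \<Rightarrow> real \<Rightarrow> (nat \<Rightarrow> nat \<Rightarrow> real) \<Rightarrow> nat set set" where
  "bad_sets n M L r d \<omega> =
     (\<lambda>j. {j}) ` {j. j < M \<and> r < (\<Sum>i<n. (\<omega> i j)\<^sup>2)}
   \<union> {T. T \<subseteq> {..<M} \<and> card T = L \<and> scatter n T \<omega> \<le> d}
   \<union> {T. T \<subseteq> {..<M} \<and> card T = 2 \<and> scatter n T \<omega> \<le> 0}"

lemma finite_bad_sets: "finite (bad_sets n M L r d \<omega>)"
  by (rule finite_subset[of _ "Pow {..<M}"]) (auto simp: bad_sets_def)

lemma exists_code_of_few_bad_sets:
  assumes "0 < Q" "0 \<le> P" "2 \<le> L"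
    and few: "2 * card (bad_sets n M L (n * P / Q) (L * (n * N) / Q) \<omega>) < M"
  shows "\<exists>C. list_decodable n P N L C \<and> M < 2 * card C"
proof -
  let ?\<B> = "bad_sets n M L (n * P / Q) (L * (n * N) / Q) \<omega>"
  have "{} \<notin> ?\<B>"
    using assms(3) by (auto simp: bad_sets_def)
  then obtain K where K: "K \<subseteq> {..<M}" "M \<le> card K + card ?\<B>"
    and avoid: "\<And>B. B \<in> ?\<B> \<Longrightarrow> \<not> B \<subseteq> K"
    using exists_large_subset_avoiding[of "{..<M}" ?\<B>] finite_bad_sets by auto
  have "\<not> n * P / Q < (\<Sum>i<n. (\<omega> i j)\<^sup>2)" if "j \<in> K" for j
    using avoid[of "{j}"] that K(1) unfolding bad_sets_def by blast
  then have "(sqrt Q)\<^sup>2 * (\<Sum>i<n. (\<omega> i j)\<^sup>2) \<le> n * P" if "j \<in> K" for j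
    using that assms(1) by (simp add: field_simps not_less)
  moreover have "0 < scatter n T \<omega>" if "T \<subseteq> K" "card T = 2" for T
    using avoid[of T] that K(1) unfolding bad_sets_def by force
  moreover have "\<not> scatter n T \<omega> \<le> L * (n * N) / Q" if "T \<subseteq> K" "card T = L" for T
    using avoid[of T] that K(1) unfolding bad_sets_def by blast
  then have "L * (n * N) < (sqrt Q)\<^sup>2 * scatter n T \<omega>" if "T \<subseteq> K" "card T = L" for T
    using that assms(1) by (simp add: field_simps not_le)
  ultimately have "list_decodable n P N L (codeword n (sqrt Q) \<omega> ` K)"
    "card (codeword n (sqrt Q) \<omega> ` K) = card K"
    using list_decodable_codeword_image[where K=K and \<sigma>="sqrt Q" and \<omega>=\<omega> and n=n and P=P and N=N and L=L]
      finite_subset[OF K(1) finite_lessThan] assms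
    by auto
  moreover have "M < 2 * card K"
    using K(2) few by linarith
  ultimately show ?thesis
    by auto
qed

section \<open>The first moment bound\<close>

lemma card_le_sum_exp:
  fixes g :: "'a \<Rightarrow> real"
  assumes "finite A" "B \<subseteq> A" "\<And>x. x \<in> B \<Longrightarrow> 0 \<le> g x"
  shows "card B \<le> (\<Sum>x\<in>A. exp (g x))"
proof -
  have "card B = (\<Sum>x\<in>B. 1::real)"
    by simp
  also have "\<dots> \<le> (\<Sum>x\<in>B. exp (g x))"
    using assms(3) by (intro sum_mono) simp
  also have "\<dots> \<le> (\<Sum>x\<in>A. exp (g x))"
    using assms(1,2) by (intro sum_mono2) auto
  finally show ?thesis .
qed

lemma (in prob_space) ex_less_of_nn_integral_less:
  assumes "(\<integral>\<^sup>+x. f x \<partial>M) < c"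
  shows "\<exists>x\<in>space M. f x < c"
proof (rule ccontr)
  assume "\<not> ?thesis"
  then have "(\<integral>\<^sup>+x. c \<partial>M) \<le> (\<integral>\<^sup>+x. f x \<partial>M)"
    by (intro nn_integral_mono) (auto simp: not_less)
  with assms show False
    by (simp add: emeasure_space_1)
qed

lemma nn_integral_sum_exp_scatter:
  fixes a c :: real
  assumes "2*a + 1 > 0" "0 < k"
  shows "(\<integral>\<^sup>+\<omega>. (\<Sum>T\<in>{T. T \<subseteq> {..<M} \<and> card T = k}. exp (a * (c - scatter n T \<omega>))) \<partial>gauss_matrix n M)
       = ennreal ((M choose k) * (exp (a*c) * ((2*a + 1) powr (- (real k - 1) / 2)) ^ n))"
proof -
  let ?\<T> = "{T. T \<subseteq> {..<M} \<and> card T = k}"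
  have finite: "finite ?\<T>"
    by (rule finite_subset[of _ "Pow {..<M}"]) auto
  have "(\<integral>\<^sup>+\<omega>. exp (a * (c - scatter n T \<omega>)) \<partial>gauss_matrix n M)
      = ennreal (exp (a*c) * ((2*a + 1) powr (- (real k - 1) / 2)) ^ n)" if "T \<in> ?\<T>" for T
  proof -
    have "T \<noteq> {}"
      using that assms(2) by auto
    have "(\<integral>\<^sup>+\<omega>. exp (a * (c - scatter n T \<omega>)) \<partial>gauss_matrix n M)
        = (\<integral>\<^sup>+\<omega>. ennreal (exp (a*c)) * exp (- a * scatter n T \<omega>) \<partial>gauss_matrix n M)"
      by (intro nn_integral_cong) (simp add: ennreal_mult[symmetric] exp_add[symmetric] algebra_simps)
    also have "\<dots> = ennreal (exp (a*c)) * (\<integral>\<^sup>+\<omega>. exp (- a * scatter n T \<omega>) \<partial>gauss_matrix n M)"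
      by (rule nn_integral_cmult) measurable
    finally show ?thesis
      using that nn_integral_exp_scatter[of T M a n] assms(1) \<open>T \<noteq> {}\<close> by (simp add: ennreal_mult)
  qed
  then have "(\<integral>\<^sup>+\<omega>. (\<Sum>T\<in>?\<T>. ennreal (exp (a * (c - scatter n T \<omega>)))) \<partial>gauss_matrix n M)
      = (\<Sum>T\<in>?\<T>. ennreal (exp (a*c) * ((2*a + 1) powr (- (real k - 1) / 2)) ^ n))"
    by (subst nn_integral_sum) auto
  then show ?thesis
    using finite by (simp add: n_subsets ennreal_of_nat_eq_real_of_nat ennreal_mult)
qed

lemma nn_integral_sum_exp_col_norm:
  fixes t c :: real
  assumes "t < 1/2"
  shows "(\<integral>\<^sup>+\<omega>. (\<Sum>j<M. exp (t * ((\<Sum>i<n. (\<omega> i j)\<^sup>2) - c))) \<partial>gauss_matrix n M)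
       = ennreal (M * (exp (- t*c) * (1 / sqrt (1 - 2*t)) ^ n))"
proof -
  have "(\<integral>\<^sup>+\<omega>. exp (t * ((\<Sum>i<n. (\<omega> i j)\<^sup>2) - c)) \<partial>gauss_matrix n M)
      = ennreal (exp (- t*c) * (1 / sqrt (1 - 2*t)) ^ n)" if "j < M" for j
  proof -
    have "(\<integral>\<^sup>+\<omega>. exp (t * ((\<Sum>i<n. (\<omega> i j)\<^sup>2) - c)) \<partial>gauss_matrix n M)
        = (\<integral>\<^sup>+\<omega>. ennreal (exp (- t*c)) * exp (t * (\<Sum>i<n. (\<omega> i j)\<^sup>2)) \<partial>gauss_matrix n M)"
      by (intro nn_integral_cong) (simp add: ennreal_mult[symmetric] exp_add[symmetric] algebra_simps)
    also have "\<dots> = ennreal (exp (- t*c)) * (\<integral>\<^sup>+\<omega>. exp (t * (\<Sum>i<n. (\<omega> i j)\<^sup>2)) \<partial>gauss_matrix n M)"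
      by (rule nn_integral_cmult) measurable
    finally show ?thesis
      using that assms by (simp add: nn_integral_exp_col_norm ennreal_mult)
  qed
  then have "(\<integral>\<^sup>+\<omega>. (\<Sum>j<M. ennreal (exp (t * ((\<Sum>i<n. (\<omega> i j)\<^sup>2) - c)))) \<partial>gauss_matrix n M)
      = (\<Sum>j<M. ennreal (exp (- t*c) * (1 / sqrt (1 - 2*t)) ^ n))"
    by (subst nn_integral_sum) auto
  then show ?thesis
    using assms by (simp add: ennreal_of_nat_eq_real_of_nat ennreal_mult)
qed

definition chernoff_weight ::
    "nat \<Rightarrow> nat \<Rightarrow> nat \<Rightarrow> real \<Rightarrow> real \<Rightarrow> real \<Rightarrow> real \<Rightarrow> real \<Rightarrow> (nat \<Rightarrow> nat \<Rightarrow> real) \<Rightarrow> real" where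
  "chernoff_weight n M L t \<alpha> \<beta> r d \<omega> =
     (\<Sum>j<M. exp (t * ((\<Sum>i<n. (\<omega> i j)\<^sup>2) - r)))
   + (\<Sum>T\<in>{T. T \<subseteq> {..<M} \<and> card T = L}. exp (\<alpha> * (d - scatter n T \<omega>)))
   + (\<Sum>T\<in>{T. T \<subseteq> {..<M} \<and> card T = 2}. exp (\<beta> * (0 - scatter n T \<omega>)))"

lemma card_bad_sets_le:
  fixes t \<alpha> \<beta> :: real
  assumes "0 \<le> t" "0 \<le> \<alpha>" "0 \<le> \<beta>"
  shows "card (bad_sets n M L r d \<omega>) \<le> chernoff_weight n M L t \<alpha> \<beta> r d \<omega>"
proof -
  let ?H = "(\<lambda>j. {j}) ` {j. j < M \<and> r < (\<Sum>i<n. (\<omega> i j)\<^sup>2)}"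
  let ?S = "{T. T \<subseteq> {..<M} \<and> card T = L \<and> scatter n T \<omega> \<le> d}"
  let ?D = "{T. T \<subseteq> {..<M} \<and> card T = 2 \<and> scatter n T \<omega> \<le> 0}"
  have finite: "finite {T. T \<subseteq> {..<M} \<and> card T = k}" for k
    by (rule finite_subset[of _ "Pow {..<M}"]) auto
  have "real (card ?H) = card {j. j < M \<and> r < (\<Sum>i<n. (\<omega> i j)\<^sup>2)}"
    by (subst card_image) (auto simp: inj_on_def)
  also have "\<dots> \<le> (\<Sum>j<M. exp (t * ((\<Sum>i<n. (\<omega> i j)\<^sup>2) - r)))"
    using assms(1) by (intro card_le_sum_exp) auto
  finally have "card ?H \<le> (\<Sum>j<M. exp (t * ((\<Sum>i<n. (\<omega> i j)\<^sup>2) - r)))" .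
  moreover have "card ?S \<le> (\<Sum>T\<in>{T. T \<subseteq> {..<M} \<and> card T = L}. exp (\<alpha> * (d - scatter n T \<omega>)))"
    using assms(2) finite by (intro card_le_sum_exp) auto
  moreover have "card ?D \<le> (\<Sum>T\<in>{T. T \<subseteq> {..<M} \<and> card T = 2}. exp (\<beta> * (0 - scatter n T \<omega>)))"
    using assms(3) finite by (intro card_le_sum_exp) (auto simp: mult_nonneg_nonpos)
  moreover have "card (bad_sets n M L r d \<omega>) \<le> card ?H + card ?S + card ?D"
    unfolding bad_sets_def by (intro card_Un_le[THEN order_trans] add_right_mono card_Un_le)
  then have "real (card (bad_sets n M L r d \<omega>)) \<le> real (card ?H) + real (card ?S) + real (card ?D)"
    unfolding of_nat_add[symmetric] of_nat_le_iff .
  ultimately show ?thesis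
    unfolding chernoff_weight_def by linarith
qed

lemma nn_integral_chernoff_weight:
  fixes t \<alpha> \<beta> r d :: real
  assumes "t < 1/2" "0 \<le> \<alpha>" "0 \<le> \<beta>" "0 < L"
  shows "(\<integral>\<^sup>+\<omega>. chernoff_weight n M L t \<alpha> \<beta> r d \<omega> \<partial>gauss_matrix n M)
       = ennreal (M * (exp (- t*r) * (1 / sqrt (1 - 2*t)) ^ n)
          + (M choose L) * (exp (\<alpha>*d) * ((2*\<alpha> + 1) powr (- (real L - 1) / 2)) ^ n)
          + (M choose 2) * ((2*\<beta> + 1) powr (- 1 / 2)) ^ n)"
proof -
  define A where "A \<omega> = (\<Sum>j<M. exp (t * ((\<Sum>i<n. (\<omega> i j)\<^sup>2) - r)))" for \<omega> :: "nat \<Rightarrow> nat \<Rightarrow> real"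
  define B where "B \<omega> = (\<Sum>T\<in>{T. T \<subseteq> {..<M} \<and> card T = L}. exp (\<alpha> * (d - scatter n T \<omega>)))" for \<omega>
  define C where "C \<omega> = (\<Sum>T\<in>{T. T \<subseteq> {..<M} \<and> card T = 2}. exp (\<beta> * (0 - scatter n T \<omega>)))" for \<omega>
  have [measurable]: "A \<in> borel_measurable (gauss_matrix n M)" "B \<in> borel_measurable (gauss_matrix n M)"
    "C \<in> borel_measurable (gauss_matrix n M)"
    unfolding A_def B_def C_def by measurable
  have "(\<integral>\<^sup>+\<omega>. chernoff_weight n M L t \<alpha> \<beta> r d \<omega> \<partial>gauss_matrix n M)
      = (\<integral>\<^sup>+\<omega>. ennreal (A \<omega>) + ennreal (B \<omega>) + ennreal (C \<omega>) \<partial>gauss_matrix n M)"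
    by (intro nn_integral_cong) (simp add: chernoff_weight_def A_def B_def C_def sum_nonneg)
  also have "\<dots> = (\<integral>\<^sup>+\<omega>. A \<omega> \<partial>gauss_matrix n M) + (\<integral>\<^sup>+\<omega>. B \<omega> \<partial>gauss_matrix n M)
      + (\<integral>\<^sup>+\<omega>. C \<omega> \<partial>gauss_matrix n M)"
    by (subst nn_integral_add; (measurable)?)+
  finally show ?thesis
    using assms nn_integral_sum_exp_col_norm[where c=r and M=M and n=n]
      nn_integral_sum_exp_scatter[where a=\<alpha> and c=d and k=L and M=M and n=n]
      nn_integral_sum_exp_scatter[where a=\<beta> and c=0 and k=2 and M=M and n=n]
    by (simp add: A_def B_def C_def ennreal_plus[symmetric] del: ennreal_plus)
qed

lemma exists_gauss_matrix_few_bad_sets: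
  fixes t \<alpha> \<beta> r d :: real
  assumes "0 \<le> t" "t < 1/2" "0 \<le> \<alpha>" "0 \<le> \<beta>" "0 < L"
    and small: "M * (exp (- t*r) * (1 / sqrt (1 - 2*t)) ^ n)
      + (M choose L) * (exp (\<alpha>*d) * ((2*\<alpha> + 1) powr (- (real L - 1) / 2)) ^ n)
      + (M choose 2) * ((2*\<beta> + 1) powr (- 1 / 2)) ^ n < M / 2"
  shows "\<exists>\<omega>. 2 * card (bad_sets n M L r d \<omega>) < M"
proof -
  have "0 \<le> M * (exp (- t*r) * (1 / sqrt (1 - 2*t)) ^ n)
      + (M choose L) * (exp (\<alpha>*d) * ((2*\<alpha> + 1) powr (- (real L - 1) / 2)) ^ n)
      + (M choose 2) * ((2*\<beta> + 1) powr (- 1 / 2)) ^ n"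
    using assms(2) by simp
  then have "(\<integral>\<^sup>+\<omega>. chernoff_weight n M L t \<alpha> \<beta> r d \<omega> \<partial>gauss_matrix n M) < ennreal (M / 2)"
    unfolding nn_integral_chernoff_weight[OF assms(2-5)] using small by (intro ennreal_lessI) auto
  then obtain \<omega> where "ennreal (chernoff_weight n M L t \<alpha> \<beta> r d \<omega>) < ennreal (M / 2)"
    using prob_space.ex_less_of_nn_integral_less[OF prob_space_gauss_matrix] by blast
  then have "chernoff_weight n M L t \<alpha> \<beta> r d \<omega> < M / 2"
    by (simp add: ennreal_less_iff chernoff_weight_def sum_nonneg del: ennreal_plus)
  with card_bad_sets_le[OF assms(1,3,4), of n M L r d \<omega>] have "real (2 * card (bad_sets n M L r d \<omega>)) < M"
    by simp
  then show ?thesis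
    unfolding of_nat_less_iff by blast
qed

definition rate_bound :: "real \<Rightarrow> real" where
  "rate_bound x = (ln x + 1 / x - 1) / 2"

lemma rate_bound_pos:
  assumes "0 < x" "x \<noteq> 1"
  shows "0 < rate_bound x"
proof -
  have "ln (1 / x) \<le> 1 / x - 1"
    using assms by (intro ln_le_minus_one) simp
  moreover have "ln (1 / x) \<noteq> 1 / x - 1"
    using ln_eq_minus_one[of "1 / x"] assms by auto
  ultimately show ?thesis
    using assms by (simp add: rate_bound_def ln_div)
qed

lemma chernoff_exponent_power:
  fixes \<theta> :: real and n :: nat
  assumes "0 < \<theta>"
  shows "exp (- ((1 - \<theta>) / 2) * (n / \<theta>)) * (1 / sqrt \<theta>) ^ n = exp (- real n * rate_bound \<theta>)"
proof -
  have "1 / sqrt \<theta> = exp (- (ln \<theta> / 2))"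
    using assms by (simp add: powr_half_sqrt[symmetric] powr_def exp_minus inverse_eq_divide)
  then have "exp (- ((1 - \<theta>) / 2) * (n / \<theta>)) * (1 / sqrt \<theta>) ^ n
      = exp (- ((1 - \<theta>) / 2) * (n / \<theta>) + n * - (ln \<theta> / 2))"
    unfolding exp_add exp_of_nat_mult by simp
  also have "\<dots> = exp (- real n * rate_bound \<theta>)"
    using assms by (simp add: rate_bound_def field_simps)
  finally show ?thesis .
qed

lemma chernoff_exponent_spread:
  fixes \<rho> :: real and n k :: nat
  assumes "0 < \<rho>"
  shows "exp ((\<rho> - 1) / 2 * (real n * real k / \<rho>)) * (\<rho> powr (- real k / 2)) ^ n = exp (- real n * rate_bound \<rho>) ^ k"
proof -
  have "(\<rho> powr (- real k / 2)) ^ n = exp (n * (- real k / 2 * ln \<rho>))"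
    using assms by (simp add: powr_def flip: exp_of_nat_mult)
  then have "exp ((\<rho> - 1) / 2 * (real n * real k / \<rho>)) * (\<rho> powr (- real k / 2)) ^ n
      = exp ((\<rho> - 1) / 2 * (real n * real k / \<rho>) + n * (- real k / 2 * ln \<rho>))"
    unfolding exp_add by simp
  also have "(\<rho> - 1) / 2 * (real n * real k / \<rho>) + n * (- real k / 2 * ln \<rho>) = k * (- real n * rate_bound \<rho>)"
    using assms by (simp add: rate_bound_def field_simps)
  finally show ?thesis
    by (simp only: exp_of_nat_mult)
qed
lemma power2_powr_neg_half:
  fixes y :: real
  assumes "0 < y"
  shows "(y\<^sup>2) powr (- 1 / 2) = 1 / y"
proof -
  have "y\<^sup>2 = y powr 2"
    using assms by (simp add: powr_realpow)
  then have "(y\<^sup>2) powr (- 1 / 2) = y powr (- 1)"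
    by (simp add: powr_powr)
  then show ?thesis
    using assms by (simp add: powr_minus_divide)
qed

lemma binomial_mult_power_le:
  fixes x :: real
  assumes "2 \<le> k" "0 \<le> x" "M * x \<le> 1/8"
  shows "(M choose k) * x ^ (k - 1) \<le> M / 8"
proof -
  have "M choose k \<le> M ^ k"
    using binomial_le_pow[of k M] by (cases "k \<le> M") (simp_all add: binomial_eq_0)
  also have "M ^ k = M * M ^ (k - 1)"
    using assms(1) by (cases k) simp_all
  finally have "real (M choose k) \<le> real M * real M ^ (k - 1)"
    by (metis of_nat_le_iff of_nat_mult of_nat_power)
  then have "(M choose k) * x ^ (k - 1) \<le> M * M ^ (k - 1) * x ^ (k - 1)"
    using assms(2) by (intro mult_right_mono) auto
  also have "\<dots> = M * (M * x) ^ (k - 1)"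
    by (simp add: power_mult_distrib)
  also have "\<dots> \<le> M * (M * x) ^ 1"
    using assms by (intro mult_left_mono power_decreasing) auto
  also have "\<dots> \<le> M * (1/8)"
    using assms(3) by (intro mult_left_mono) auto
  finally show ?thesis
    by simp
qed

lemma binomial_2_mult_inverse_power_le:
  assumes "1 \<le> M" "1 \<le> n"
  shows "(M choose 2) * (1 / (8 * real M)) ^ n \<le> M / 8"
proof -
  have "M * (1 / (8 * real M)) ^ n \<le> M * (1 / (8 * real M)) ^ 1"
    using assms by (intro mult_left_mono power_decreasing) auto
  then have "M * (1 / (8 * real M)) ^ n \<le> 1/8"
    using assms(1) by simp
  then show ?thesis
    using binomial_mult_power_le[of 2 "(1 / (8 * real M)) ^ n" M] by simp
qed

lemma exists_code_of_rate_bounds: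
  fixes n M L :: nat and P N Q :: real
  assumes "0 < Q" "Q < P" "0 < N" "2 \<le> L" "1 \<le> n" "1 \<le> M"
    and \<rho>: "1 < (real L - 1) * Q / (L * N)"
    and power: "exp (- real n * rate_bound (Q / P)) \<le> 1/8"
    and spread: "M * exp (- real n * rate_bound ((real L - 1) * Q / (L * N))) \<le> 1/8"
  shows "\<exists>C. list_decodable n P N L C \<and> M < 2 * card C"
proof -
  define \<theta> where "\<theta> = Q / P"
  define \<rho> where "\<rho> = (real L - 1) * Q / (L * N)"
  have "0 < \<theta>" "\<theta> < 1" "1 < \<rho>"
    using assms(1,2) \<rho> by (simp_all add: \<theta>_def \<rho>_def)
  \<comment> \<open>Chernoff parameters for which each of the three expected counts is at most \<open>M/8\<close>\<close>
  define t where "t = (1 - \<theta>) / 2"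
  define \<alpha> where "\<alpha> = (\<rho> - 1) / 2"
  define \<beta> where "\<beta> = ((8 * real M)\<^sup>2 - 1) / 2"
  have "n * P / Q = n / \<theta>" "1 - 2*t = \<theta>"
    using assms(1,2) by (simp_all add: \<theta>_def t_def field_simps)
  have "exp (- t * (n * P / Q)) * (1 / sqrt (1 - 2*t)) ^ n = exp (- real n * rate_bound \<theta>)"
    unfolding \<open>1 - 2*t = \<theta>\<close> \<open>n * P / Q = n / \<theta>\<close> unfolding t_def
    using \<open>0 < \<theta>\<close> by (rule chernoff_exponent_power)
  then have col_norm: "M * (exp (- t * (n * P / Q)) * (1 / sqrt (1 - 2*t)) ^ n) \<le> M / 8"
    using mult_left_mono[OF power, of "real M"] by (simp add: \<theta>_def)
  have "L * N / Q = (real L - 1) / \<rho>"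
    unfolding \<rho>_def using assms(1,3,4) by (simp add: field_simps)
  then have "L * (n * N) / Q = n * ((real L - 1) / \<rho>)"
    by (metis times_divide_eq_right mult.left_commute)
  then have arg: "L * (n * N) / Q = n * real (L - 1) / \<rho>"
    using assms(4) by (simp add: of_nat_diff)
  have base: "2*\<alpha> + 1 = \<rho>" and exponent: "- (real L - 1) / 2 = - real (L - 1) / 2"
    using assms(4) by (simp_all add: \<alpha>_def of_nat_diff field_simps)
  have "exp (\<alpha> * (L * (n * N) / Q)) * ((2*\<alpha> + 1) powr (- (real L - 1) / 2)) ^ n
      = exp (- real n * rate_bound \<rho>) ^ (L - 1)"
    unfolding arg base exponent unfolding \<alpha>_def using \<open>1 < \<rho>\<close>
    by (intro chernoff_exponent_spread) simp
  then have scatter: "(M choose L) * (exp (\<alpha> * (L * (n * N) / Q)) * ((2*\<alpha> + 1) powr (- (real L - 1) / 2)) ^ n) \<le> M / 8"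
    using binomial_mult_power_le[OF assms(4) _ spread] by (simp add: \<rho>_def)
  have "2*\<beta> + 1 = (8 * real M)\<^sup>2"
    by (simp add: \<beta>_def field_simps)
  then have "(2*\<beta> + 1) powr (- 1 / 2) = 1 / (8 * real M)"
    using assms(6) power2_powr_neg_half[of "8 * real M"] by simp
  then have pairs: "(M choose 2) * ((2*\<beta> + 1) powr (- 1 / 2)) ^ n \<le> M / 8"
    using binomial_2_mult_inverse_power_le[OF assms(6,5)] by simp
  have "1 \<le> (8 * real M)\<^sup>2"
    using assms(6) by (intro one_le_power) simp
  then have "0 \<le> t" "t < 1/2" "0 \<le> \<alpha>" "0 \<le> \<beta>" "0 < L"
    using \<open>0 < \<theta>\<close> \<open>\<theta> < 1\<close> \<open>1 < \<rho>\<close> assms(4) by (simp_all add: t_def \<alpha>_def \<beta>_def)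
  moreover have "M * (exp (- t * (n * P / Q)) * (1 / sqrt (1 - 2*t)) ^ n)
      + (M choose L) * (exp (\<alpha> * (L * (n * N) / Q)) * ((2*\<alpha> + 1) powr (- (real L - 1) / 2)) ^ n)
      + (M choose 2) * ((2*\<beta> + 1) powr (- 1 / 2)) ^ n < M / 2"
    using col_norm scatter pairs assms(6) by linarith
  ultimately obtain \<omega> where "2 * card (bad_sets n M L (n * P / Q) (L * (n * N) / Q) \<omega>) < M"
    using exists_gauss_matrix_few_bad_sets by blast
  then show ?thesis
    using exists_code_of_few_bad_sets assms(1,2,4) by simp
qed

lemma exists_code_card_gt:
  fixes n L :: nat and P N Q R :: real
  assumes "0 < Q" "Q < P" "0 < N" "2 \<le> L" "1 \<le> n" "0 \<le> R"
    and \<rho>: "1 < (real L - 1) * Q / (L * N)"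
    and power: "exp (- real n * rate_bound (Q / P)) \<le> 1/8"
    and spread: "exp (- real n * (rate_bound ((real L - 1) * Q / (L * N)) - R)) \<le> 1/8"
  shows "\<exists>C. list_decodable n P N L C \<and> exp (n * R) < 4 * card C"
proof -
  define y where "y = exp (n * R)"
  define M where "M = nat \<lfloor>y\<rfloor>"
  have "1 \<le> y"
    using assms(6) by (simp add: y_def)
  then have "1 \<le> \<lfloor>y\<rfloor>" "of_int \<lfloor>y\<rfloor> \<le> y" "y < of_int \<lfloor>y\<rfloor> + 1"
    by (simp_all add: le_floor_iff)
  moreover have "real M = of_int \<lfloor>y\<rfloor>"
    using \<open>1 \<le> y\<close> by (simp add: M_def)
  ultimately have M: "1 \<le> M" "real M \<le> y" "y < 2 * real M"
    by linarith+
  have "M * exp (- real n * rate_bound ((real L - 1) * Q / (L * N))) \<le> y * exp (- real n * rate_bound ((real L - 1) * Q / (L * N)))"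
    using M(2) by (simp add: mult_right_mono)
  also have "\<dots> \<le> 1/8"
    using spread by (simp add: y_def exp_add[symmetric] algebra_simps)
  finally obtain C where "list_decodable n P N L C" "M < 2 * card C"
    using exists_code_of_rate_bounds[OF assms(1-5) M(1) \<rho> power] by blast
  moreover from this(2) have "y < 4 * card C"
    using M(3) by linarith
  ultimately show ?thesis
    by (auto simp: y_def)
qed

lemma eventually_exp_neg_le:
  assumes "0 < c" "0 < \<epsilon>"
  shows "eventually (\<lambda>n. exp (- real n * c) \<le> \<epsilon>) sequentially"
proof -
  have "eventually (\<lambda>n. - ln \<epsilon> / c \<le> real n) sequentially"
    using filterlim_real_sequentially unfolding filterlim_at_top by blast
  then show ?thesis
  proof (rule eventually_mono)
    fix n assume "- ln \<epsilon> / c \<le> real n"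
    then have "- real n * c \<le> ln \<epsilon>"
      using assms(1) by (simp add: field_simps)
    then show "exp (- real n * c) \<le> \<epsilon>"
      using assms(2) by (metis exp_le_cancel_iff exp_ln)
  qed
qed

lemma eventually_code_rate_ge:
  fixes L :: nat and P N Q R :: real
  assumes "0 < Q" "Q < P" "0 < N" "2 \<le> L"
    and \<rho>: "1 < (real L - 1) * Q / (L * N)"
    and R: "R < rate_bound ((real L - 1) * Q / (L * N))"
  shows "eventually (\<lambda>n. \<exists>C. list_decodable n P N L C \<and> R \<le> code_rate n C) sequentially"
proof -
  define \<rho> where "\<rho> = (real L - 1) * Q / (L * N)"
  define b where "b = rate_bound \<rho>"
  define R' where "R' = (max R 0 + b) / 2"
  have "0 < b"
    unfolding b_def using \<rho> by (intro rate_bound_pos) (auto simp flip: \<rho>_def)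
  then have R': "0 \<le> R'" "R < R'" "R' < b"
    using R by (auto simp: R'_def b_def \<rho>_def)
  have "eventually (\<lambda>n. 1 \<le> n \<and> exp (- real n * rate_bound (Q / P)) \<le> 1/8
      \<and> exp (- real n * (b - R')) \<le> 1/8 \<and> exp (- real n * (R' - R)) \<le> 1/4) sequentially"
    using eventually_exp_neg_le[of "rate_bound (Q / P)" "1/8"]
      eventually_exp_neg_le[of "b - R'" "1/8"] eventually_exp_neg_le[of "R' - R" "1/4"]
      assms(1,2) R' rate_bound_pos[of "Q / P"]
    by (intro eventually_conj) auto
  then show ?thesis
  proof (rule eventually_mono)
    fix n :: nat
    assume n: "1 \<le> n \<and> exp (- real n * rate_bound (Q / P)) \<le> 1/8
      \<and> exp (- real n * (b - R')) \<le> 1/8 \<and> exp (- real n * (R' - R)) \<le> 1/4"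
    then obtain C where C: "list_decodable n P N L C" "exp (n * R') < 4 * card C"
      using exists_code_card_gt[OF assms(1-4) _ R'(1) \<rho>] by (auto simp: b_def \<rho>_def)
    have "exp (n * R) = exp (n * R') * exp (- real n * (R' - R))"
      by (simp add: exp_add[symmetric] algebra_simps)
    also have "\<dots> \<le> exp (n * R') / 4"
      using n by simp
    also have "\<dots> < card C"
      using C(2) by simp
    finally have "exp (n * R) < card C" .
    then have "n * R < ln (card C)"
      by (metis exp_gt_zero exp_less_cancel_iff exp_ln order.strict_trans)
    then show "\<exists>C. list_decodable n P N L C \<and> R \<le> code_rate n C"
      using C(1) n by (intro exI[of _ C]) (simp add: code_rate_def field_simps)
  qed
qed

lemma avg_rad_capacity_nonneg:
  assumes "2 \<le> L"
  shows "0 \<le> avg_rad_capacity L P N"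
proof -
  have "list_decodable n P N L {\<lambda>_. 0}" for n
  proof -
    have "card S \<noteq> L" if "S \<subseteq> {\<lambda>_. 0}" for S :: "(nat \<Rightarrow> real) set"
      using that assms card_mono[OF _ that] by fastforce
    then show ?thesis
      by (auto simp: list_decodable_def in_ball_def)
  qed
  then have "eventually (\<lambda>n. ereal 0 \<le> (SUP C\<in>{C. list_decodable n P N L C}. ereal (code_rate n C))) sequentially"
    by (intro always_eventually allI SUP_upper2[of "{\<lambda>_. 0}"]) (auto simp: code_rate_def)
  then show ?thesis
    unfolding avg_rad_capacity_def zero_ereal_def by (intro le_Limsup) auto
qed

lemma ereal_le_avg_rad_capacity:
  assumes "2 \<le> L"
    and codes: "\<And>R. 0 < R \<Longrightarrow> R < x \<Longrightarrow>
      eventually (\<lambda>n. \<exists>C. list_decodable n P N L C \<and> R \<le> code_rate n C) sequentially"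
  shows "ereal x \<le> avg_rad_capacity L P N"
proof (cases "x \<le> 0")
  case True
  then show ?thesis
    using avg_rad_capacity_nonneg[OF assms(1)] by (simp add: order_trans[of _ 0] zero_ereal_def)
next
  case False
  show ?thesis
  proof (rule dense_le_bounded[of 0])
    show "0 < ereal x"
      using False by simp
    fix w assume w: "0 < w" "w < ereal x"
    then obtain R where R: "w = ereal R" "0 < R" "R < x"
      by (cases w) auto
    have "eventually (\<lambda>n. ereal R \<le> (SUP C\<in>{C. list_decodable n P N L C}. ereal (code_rate n C))) sequentially"
      using codes[OF R(2,3)] by (rule eventually_mono) (auto intro: SUP_upper2)
    then show "w \<le> avg_rad_capacity L P N"
      unfolding avg_rad_capacity_def R(1) by (intro le_Limsup) auto
  qed
qed

lemma rate_bound_approx_from_below: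
  assumes "1 < \<rho>" "R < rate_bound \<rho>"
  shows "\<exists>\<theta>. 0 < \<theta> \<and> \<theta> < 1 \<and> 1 < \<rho> * \<theta> \<and> R < rate_bound (\<rho> * \<theta>)"
proof -
  have lim: "((\<lambda>\<theta>. \<rho> * \<theta>) \<longlongrightarrow> \<rho>) (at_left 1)"
    by (auto intro!: tendsto_eq_intros)
  moreover have "isCont rate_bound \<rho>"
    unfolding rate_bound_def using assms(1) by (intro continuous_intros) auto
  ultimately have "((\<lambda>\<theta>. rate_bound (\<rho> * \<theta>)) \<longlongrightarrow> rate_bound \<rho>) (at_left 1)"
    by (rule isCont_tendsto_compose[rotated])
  then have "eventually (\<lambda>\<theta>. R < rate_bound (\<rho> * \<theta>)) (at_left 1)"
    using assms(2) by (rule order_tendstoD(1))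
  moreover have "eventually (\<lambda>\<theta>. 1 < \<rho> * \<theta>) (at_left 1)"
    using lim assms(1) by (rule order_tendstoD(1))
  moreover have "eventually (\<lambda>\<theta>. \<theta> \<in> {0<..<1}) (at_left (1::real))"
    by (rule eventually_at_left_real) simp
  ultimately have "eventually (\<lambda>\<theta>. 0 < \<theta> \<and> \<theta> < 1 \<and> 1 < \<rho> * \<theta> \<and> R < rate_bound (\<rho> * \<theta>)) (at_left 1)"
    by eventually_elim auto
  then show ?thesis
    by (rule eventually_happens'[rotated]) simp
qed

theorem mainTheorem5:
  fixes P N :: real and L :: nat
  assumes "P > 0" and "N > 0" and "L \<ge> 2"
    and "N / P \<le> (real L - 1) / real L"
  shows "ereal ((1/2) * (ln ((real L - 1) * P / (real L * N)) + real L * N / ((real L - 1) * P) - 1))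
           \<le> avg_rad_capacity L P N"
proof -
  define \<rho> where "\<rho> = (real L - 1) * P / (real L * N)"
  have "N * real L \<le> (real L - 1) * P"
    using assms by (simp add: divide_le_eq le_divide_eq mult.commute)
  then have "1 \<le> \<rho>"
    using assms by (simp add: \<rho>_def le_divide_eq mult.commute)
  have capacity: "ereal (rate_bound \<rho>) \<le> avg_rad_capacity L P N"
  proof (rule ereal_le_avg_rad_capacity[OF assms(3)])
    fix R assume R: "0 < R" "R < rate_bound \<rho>"
    then have "1 < \<rho>"
      using \<open>1 \<le> \<rho>\<close> by (cases "\<rho> = 1") (auto simp: rate_bound_def)
    then obtain \<theta> where \<theta>: "0 < \<theta>" "\<theta> < 1" "1 < \<rho> * \<theta>" "R < rate_bound (\<rho> * \<theta>)"
      using rate_bound_approx_from_below R(2) by blast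
    have "(real L - 1) * (\<theta> * P) / (L * N) = \<rho> * \<theta>"
      by (simp add: \<rho>_def)
    then show "eventually (\<lambda>n. \<exists>C. list_decodable n P N L C \<and> R \<le> code_rate n C) sequentially"
      using eventually_code_rate_ge[of "\<theta> * P" P N L R] \<theta> assms(1-3) by simp
  qed
  have "(1/2) * (ln \<rho> + real L * N / ((real L - 1) * P) - 1) = rate_bound \<rho>"
    by (simp add: rate_bound_def \<rho>_def)
  then show ?thesis
    using capacity unfolding \<rho>_def[symmetric] by simp
qed

end
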